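(* Consider the clique inference problem with a max-like clique potential $C(\mathbf{v})=\max_{v\in V} f_v(n_v(\mathbf{v}))$, where each $f_v:\{0,1,\dots,n\}\to\mathbb{R}$ is non-decreasing. Then the $\alpha$-pass algorithm returns an assignment maximizing $F$ (a MAP assignment).
   Context: Clique inference problem: there are $n$ vertices $1,\dots,n$, a finite set $V$ of values, real vertex potentials $\psi_{jv}$ ($1\le j\le n$, $v\in V$), and a symmetric clique potential $C$, i.e. $C(v_1,\dots,v_n)$ depends only on the counts $n_v(\mathbf{v})=|\{j:v_j=v\}|$. The objective is to maximize $F(\mathbf{v})=\sum_{j=1}^n\psi_{jv_j}+C(\mathbf{v})$ over $\mathbf{v}\in V^n$. The $\alpha$-pass algorithm: for each $\alpha\in V$, sort the vertices in decreasing order of $\psi_{j\alpha}-\max_{v\neq\alpha}\psi_{jv}$; for each $k\in\{1,\dots,n\}$ form the assignment $\mathbf{v}^{\alpha,k}$ that gives the first $k$ sorted vertices the value $\alpha$ and every other vertex its best non-$\alpha$ value (a $v\ne\alpha$ maximizing $\psi_{jv}$); output the assignment $\mathbf{v}^{\alpha,k}$ with the largest value of $F$ over all $\alpha\in V$ and $1\le k\le n$. *)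

theory Defs
  imports Complex_Main
begin

text \<open>Assignments of values to the vertices 1..n are functions nat => 'v;
only their values on {1..n} matter.\<close>

definition assignments :: "nat \<Rightarrow> 'v set \<Rightarrow> (nat \<Rightarrow> 'v) set" where
  "assignments n V = {x. \<forall>j\<in>{1..n}. x j \<in> V}"

definition val_count :: "nat \<Rightarrow> (nat \<Rightarrow> 'v) \<Rightarrow> 'v \<Rightarrow> nat" where
  "val_count n x v = card {j\<in>{1..n}. x j = v}"

definition max_clique_pot :: "nat \<Rightarrow> 'v set \<Rightarrow> ('v \<Rightarrow> nat \<Rightarrow> real) \<Rightarrow> (nat \<Rightarrow> 'v) \<Rightarrow> real" where
  "max_clique_pot n V f x = Max ((\<lambda>v. f v (val_count n x v)) ` V)"

definition objF :: "nat \<Rightarrow> (nat \<Rightarrow> 'v \<Rightarrow> real) \<Rightarrow> ((nat \<Rightarrow> 'v) \<Rightarrow> real) \<Rightarrow> (nat \<Rightarrow> 'v) \<Rightarrow> real" where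
  "objF n psi C x = (\<Sum>j=1..n. psi j (x j)) + C x"

definition alpha_key :: "'v set \<Rightarrow> (nat \<Rightarrow> 'v \<Rightarrow> real) \<Rightarrow> 'v \<Rightarrow> nat \<Rightarrow> real" where
  "alpha_key V psi \<alpha> j = psi j \<alpha> - Max (psi j ` (V - {\<alpha>}))"

definition is_alpha_sort :: "nat \<Rightarrow> 'v set \<Rightarrow> (nat \<Rightarrow> 'v \<Rightarrow> real) \<Rightarrow> 'v \<Rightarrow> (nat \<Rightarrow> nat) \<Rightarrow> bool" where
  "is_alpha_sort n V psi \<alpha> ord \<longleftrightarrow>
     bij_betw ord {1..n} {1..n} \<and>
     (\<forall>p\<in>{1..n}. \<forall>q\<in>{1..n}. p \<le> q \<longrightarrow> alpha_key V psi \<alpha> (ord q) \<le> alpha_key V psi \<alpha> (ord p))"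

definition is_best_other :: "'v set \<Rightarrow> (nat \<Rightarrow> 'v \<Rightarrow> real) \<Rightarrow> nat \<Rightarrow> 'v \<Rightarrow> 'v \<Rightarrow> bool" where
  "is_best_other V psi j \<alpha> w \<longleftrightarrow> w \<in> V - {\<alpha>} \<and> (\<forall>v\<in>V - {\<alpha>}. psi j v \<le> psi j w)"

definition alpha_pass_cand :: "(nat \<Rightarrow> nat) \<Rightarrow> (nat \<Rightarrow> 'v \<Rightarrow> 'v) \<Rightarrow> 'v \<Rightarrow> nat \<Rightarrow> nat \<Rightarrow> 'v" where
  "alpha_pass_cand ord b \<alpha> k j = (if j \<in> ord ` {1..k} then \<alpha> else b j \<alpha>)"

end

theory Submission
  imports Defs
begin

text \<open>Given any assignment x, let \<alpha> be a value attaining the maximum in C(x) and let \<beta> = \<alpha>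
if \<alpha> occurs in x, otherwise any value occurring in x; put k = n_\<beta>(x) \<ge> 1.
Among all assignments giving exactly k vertices the value \<beta>, the vertex potentials are
maximised by giving \<beta> to the k vertices of largest key and the best other value to the rest,
which is the candidate v^{\<beta>,k}. It also has n_\<alpha>(v^{\<beta>,k}) \<ge> n_\<alpha>(x), so by monotonicity of f_\<alpha>
its clique potential is at least f_\<alpha>(n_\<alpha>(x)) = C(x).\<close>

lemma sum_le_sum_sorted_prefix:
  fixes g :: "nat \<Rightarrow> 'a::ordered_comm_monoid_add"
  assumes bij: "bij_betw ord {1..n} {1..n}"
    and sorted: "\<forall>p\<in>{1..n}. \<forall>q\<in>{1..n}. p \<le> q \<longrightarrow> g (ord q) \<le> g (ord p)"
    and "k \<le> n" and T: "T \<subseteq> {1..n}" and "card T = k"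
  shows "sum g T \<le> sum g (ord ` {1..k})"
proof -
  define S where "S = ord ` {1..k}"
  have S: "S \<subseteq> {1..n}" using bij \<open>k \<le> n\<close> unfolding S_def bij_betw_def by auto
  have "card S = k" unfolding S_def using bij \<open>k \<le> n\<close>
    by (subst card_image) (auto simp: bij_betw_def intro: inj_on_subset)
  have dominates: "g t \<le> g s" if "s \<in> S" "t \<in> {1..n} - S" for s t
  proof -
    obtain p where p: "p \<in> {1..k}" "s = ord p" using \<open>s \<in> S\<close> unfolding S_def by auto
    obtain q where q: "q \<in> {1..n}" "t = ord q" using \<open>t \<in> {1..n} - S\<close> bij
      by (metis DiffD1 bij_betw_def imageE)
    have "q \<notin> {1..k}" using q that(2) S_def by auto
    with p q \<open>k \<le> n\<close> show ?thesis using sorted by auto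
  qed
  have fin: "finite T" "finite S" using T S finite_subset by auto
  have "card (T - S) = card (S - T)"
    using fin \<open>card T = k\<close> \<open>card S = k\<close>
    by (metis Int_commute card_Diff_subset_Int finite_Int card_Int_Diff add_diff_cancel_left')
  then obtain h where h: "bij_betw h (T - S) (S - T)"
    using fin by (metis finite_Diff finite_same_card_bij)
  have "sum g (T - S) \<le> sum (g \<circ> h) (T - S)"
  proof (rule sum_mono)
    fix t assume t: "t \<in> T - S"
    have "h t \<in> S" using h t bij_betw_apply by fastforce
    with t T show "g t \<le> (g \<circ> h) t" using dominates by auto
  qed
  also have "\<dots> = sum g (S - T)" using sum.reindex_bij_betw[OF h] by simp
  finally have "sum g (T - S) \<le> sum g (S - T)" .
  then have "sum g (T \<inter> S) + sum g (T - S) \<le> sum g (S \<inter> T) + sum g (S - T)"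
    by (simp add: Int_commute add_left_mono)
  with fin show ?thesis unfolding S_def[symmetric] by (metis sum.Int_Diff)
qed

lemma alpha_key_eq_best_other:
  assumes "finite V" and "is_best_other V psi j \<alpha> w"
  shows "alpha_key V psi \<alpha> j = psi j \<alpha> - psi j w"
proof -
  have "Max (psi j ` (V - {\<alpha>})) = psi j w"
    using assms by (intro Max_eqI) (auto simp: is_best_other_def)
  then show ?thesis unfolding alpha_key_def by simp
qed

lemma sum_add_if_subset:
  fixes g h :: "nat \<Rightarrow> 'a::comm_monoid_add"
  assumes "S \<subseteq> A" and "finite A"
  shows "(\<Sum>j\<in>A. g j + (if j \<in> S then h j else 0)) = sum g A + sum h S"
  using assms by (simp add: sum.distrib sum.inter_restrict[symmetric] Int_absorb1)

lemma sum_psi_le_best_other: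
  assumes best: "\<forall>j\<in>{1..n}. is_best_other V psi j \<alpha> (b j \<alpha>)"
    and x: "x \<in> assignments n V"
  shows "(\<Sum>j=1..n. psi j (x j))
    \<le> (\<Sum>j=1..n. psi j (b j \<alpha>)) + (\<Sum>j\<in>{j\<in>{1..n}. x j = \<alpha>}. psi j \<alpha> - psi j (b j \<alpha>))"
proof -
  have "(\<Sum>j=1..n. psi j (x j))
      \<le> (\<Sum>j=1..n. psi j (b j \<alpha>) + (if j \<in> {j\<in>{1..n}. x j = \<alpha>} then psi j \<alpha> - psi j (b j \<alpha>) else 0))"
    using best x by (intro sum_mono) (auto simp: is_best_other_def assignments_def)
  also have "\<dots> = (\<Sum>j=1..n. psi j (b j \<alpha>))
      + (\<Sum>j\<in>{j\<in>{1..n}. x j = \<alpha>}. psi j \<alpha> - psi j (b j \<alpha>))"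
    by (rule sum_add_if_subset) auto
  finally show ?thesis .
qed

lemma sum_psi_alpha_pass_cand:
  assumes best: "\<forall>j\<in>{1..n}. is_best_other V psi j \<alpha> (b j \<alpha>)"
    and S: "ord ` {1..k} \<subseteq> {1..n}"
  shows "(\<Sum>j=1..n. psi j (alpha_pass_cand ord b \<alpha> k j))
    = (\<Sum>j=1..n. psi j (b j \<alpha>)) + (\<Sum>j\<in>ord ` {1..k}. psi j \<alpha> - psi j (b j \<alpha>))"
proof -
  have "(\<Sum>j=1..n. psi j (alpha_pass_cand ord b \<alpha> k j))
      = (\<Sum>j=1..n. psi j (b j \<alpha>) + (if j \<in> ord ` {1..k} then psi j \<alpha> - psi j (b j \<alpha>) else 0))"
    by (rule sum.cong) (auto simp: alpha_pass_cand_def)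
  also have "\<dots> = (\<Sum>j=1..n. psi j (b j \<alpha>)) + (\<Sum>j\<in>ord ` {1..k}. psi j \<alpha> - psi j (b j \<alpha>))"
    using S by (rule sum_add_if_subset) auto
  finally show ?thesis .
qed

lemma alpha_pass_cand_maximises_vertex_sum:
  assumes "finite V" and sorted: "is_alpha_sort n V psi \<alpha> ord"
    and best: "\<forall>j\<in>{1..n}. is_best_other V psi j \<alpha> (b j \<alpha>)"
    and x: "x \<in> assignments n V"
  shows "(\<Sum>j=1..n. psi j (x j)) \<le> (\<Sum>j=1..n. psi j (alpha_pass_cand ord b \<alpha> (val_count n x \<alpha>) j))"
proof -
  define key where "key j = psi j \<alpha> - psi j (b j \<alpha>)" for j
  define T where "T = {j\<in>{1..n}. x j = \<alpha>}"
  define k where "k = val_count n x \<alpha>"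
  have bij: "bij_betw ord {1..n} {1..n}" using sorted unfolding is_alpha_sort_def by blast
  have "T \<subseteq> {1..n}" and "card T = k" unfolding T_def k_def val_count_def by auto
  then have "k \<le> n" using card_mono[of "{1..n}" T] by simp
  have key_sorted: "\<forall>p\<in>{1..n}. \<forall>q\<in>{1..n}. p \<le> q \<longrightarrow> key (ord q) \<le> key (ord p)"
  proof (intro ballI impI)
    fix p q assume pq: "p \<in> {1..n}" "q \<in> {1..n}" "p \<le> q"
    then have "ord p \<in> {1..n}" "ord q \<in> {1..n}" using bij bij_betw_apply by fastforce+
    with pq sorted best \<open>finite V\<close> show "key (ord q) \<le> key (ord p)"
      unfolding is_alpha_sort_def key_def by (metis alpha_key_eq_best_other)
  qed
  have "ord ` {1..k} \<subseteq> {1..n}" using bij \<open>k \<le> n\<close> unfolding bij_betw_def by auto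
  have "(\<Sum>j=1..n. psi j (x j)) \<le> (\<Sum>j=1..n. psi j (b j \<alpha>)) + sum key T"
    using sum_psi_le_best_other[of n V psi \<alpha> b x] best x unfolding key_def T_def by simp
  also have "\<dots> \<le> (\<Sum>j=1..n. psi j (b j \<alpha>)) + sum key (ord ` {1..k})"
    using sum_le_sum_sorted_prefix[OF bij key_sorted \<open>k \<le> n\<close> \<open>T \<subseteq> {1..n}\<close> \<open>card T = k\<close>]
    by simp
  also have "\<dots> = (\<Sum>j=1..n. psi j (alpha_pass_cand ord b \<alpha> k j))"
    using sum_psi_alpha_pass_cand[of n V psi \<alpha> b ord k] best \<open>ord ` {1..k} \<subseteq> {1..n}\<close>
    unfolding key_def by simp
  finally show ?thesis unfolding k_def .
qed

lemma val_count_le: "val_count n x v \<le> n"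
proof -
  have "card {j\<in>{1..n}. x j = v} \<le> card {1..n}" by (intro card_mono) auto
  then show ?thesis unfolding val_count_def by simp
qed

lemma val_count_pos:
  assumes "j \<in> {1..n}"
  shows "1 \<le> val_count n x (x j)"
proof -
  have "{i\<in>{1..n}. x i = x j} \<noteq> {}" using assms by auto
  then show ?thesis unfolding val_count_def by (simp add: Suc_le_eq card_gt_0_iff)
qed

lemma occurring_value_or_absent:
  assumes x: "x \<in> assignments n V" and "1 \<le> n" and "\<alpha> \<in> V"
  obtains \<beta> where "\<beta> \<in> V" and "1 \<le> val_count n x \<beta>" and "\<beta> = \<alpha> \<or> val_count n x \<alpha> = 0"
proof (cases "val_count n x \<alpha> = 0")
  case True
  have "x 1 \<in> V" using x \<open>1 \<le> n\<close> unfolding assignments_def by auto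
  moreover have "1 \<le> val_count n x (x 1)" using \<open>1 \<le> n\<close> by (intro val_count_pos) simp
  ultimately show ?thesis using that True by blast
next
  case False
  then show ?thesis using that \<open>\<alpha> \<in> V\<close> by simp
qed

lemma val_count_alpha_pass_cand:
  assumes bij: "bij_betw ord {1..n} {1..n}" and "k \<le> n"
    and best: "\<forall>j\<in>{1..n}. is_best_other V psi j \<alpha> (b j \<alpha>)"
  shows "val_count n (alpha_pass_cand ord b \<alpha> k) \<alpha> = k"
proof -
  have "ord ` {1..k} \<subseteq> {1..n}" using bij \<open>k \<le> n\<close> unfolding bij_betw_def by auto
  then have "{j\<in>{1..n}. alpha_pass_cand ord b \<alpha> k j = \<alpha>} = ord ` {1..k}"
    using best unfolding alpha_pass_cand_def is_best_other_def by auto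
  moreover have "card (ord ` {1..k}) = k"
    using bij \<open>k \<le> n\<close> by (subst card_image) (auto simp: bij_betw_def intro: inj_on_subset)
  ultimately show ?thesis unfolding val_count_def by simp
qed

lemma max_clique_pot_attained:
  assumes "finite V" and "V \<noteq> {}"
  obtains \<alpha> where "\<alpha> \<in> V" and "max_clique_pot n V f x = f \<alpha> (val_count n x \<alpha>)"
proof -
  have "max_clique_pot n V f x \<in> (\<lambda>v. f v (val_count n x v)) ` V"
    unfolding max_clique_pot_def using assms by (intro Max_in) auto
  then show ?thesis using that by auto
qed

lemma max_clique_pot_le_of_count_le:
  assumes "finite V" and "\<alpha> \<in> V" and "mono_on {0..n} (f \<alpha>)"
    and "max_clique_pot n V f x = f \<alpha> (val_count n x \<alpha>)"
    and "val_count n x \<alpha> \<le> val_count n y \<alpha>"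
  shows "max_clique_pot n V f x \<le> max_clique_pot n V f y"
proof -
  have "f \<alpha> (val_count n x \<alpha>) \<le> f \<alpha> (val_count n y \<alpha>)"
    using assms(3,5) val_count_le[of n y \<alpha>] by (auto intro: mono_onD)
  also have "\<dots> \<le> max_clique_pot n V f y"
    unfolding max_clique_pot_def using assms(1,2) by (intro Max_ge) auto
  finally show ?thesis using assms(4) by simp
qed

theorem theorem1:
  fixes n :: nat and V :: "'v set" and psi :: "nat \<Rightarrow> 'v \<Rightarrow> real"
    and f :: "'v \<Rightarrow> nat \<Rightarrow> real"
    and ord :: "'v \<Rightarrow> nat \<Rightarrow> nat" and b :: "nat \<Rightarrow> 'v \<Rightarrow> 'v"
    and \<alpha>0 :: 'v and k0 :: nat
  assumes finV: "finite V" and cardV: "card V \<ge> 2" and npos: "n \<ge> 1"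
    and mono_f: "\<forall>v\<in>V. mono_on {0..n} (f v)"
    and sorted: "\<forall>\<alpha>\<in>V. is_alpha_sort n V psi \<alpha> (ord \<alpha>)"
    and best: "\<forall>j\<in>{1..n}. \<forall>\<alpha>\<in>V. is_best_other V psi j \<alpha> (b j \<alpha>)"
    and out: "\<alpha>0 \<in> V" "k0 \<in> {1..n}"
    and out_max: "\<forall>\<alpha>\<in>V. \<forall>k\<in>{1..n}.
        objF n psi (max_clique_pot n V f) (alpha_pass_cand (ord \<alpha>) b \<alpha> k)
        \<le> objF n psi (max_clique_pot n V f) (alpha_pass_cand (ord \<alpha>0) b \<alpha>0 k0)"
  shows "\<forall>x\<in>assignments n V.
           objF n psi (max_clique_pot n V f) x
           \<le> objF n psi (max_clique_pot n V f) (alpha_pass_cand (ord \<alpha>0) b \<alpha>0 k0)"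
proof
  fix x assume x: "x \<in> assignments n V"
  obtain \<alpha> where "\<alpha> \<in> V" and C_x: "max_clique_pot n V f x = f \<alpha> (val_count n x \<alpha>)"
    using max_clique_pot_attained[OF finV] cardV by (metis card.empty not_numeral_le_zero)
  obtain \<beta> where "\<beta> \<in> V" and "1 \<le> val_count n x \<beta>" and \<beta>: "\<beta> = \<alpha> \<or> val_count n x \<alpha> = 0"
    using occurring_value_or_absent[OF x npos \<open>\<alpha> \<in> V\<close>] .
  define k where "k = val_count n x \<beta>"
  define cand where "cand = alpha_pass_cand (ord \<beta>) b \<beta> k"
  have bij: "bij_betw (ord \<beta>) {1..n} {1..n}"
    using sorted \<open>\<beta> \<in> V\<close> unfolding is_alpha_sort_def by blast
  have "k \<in> {1..n}" using \<open>1 \<le> val_count n x \<beta>\<close> val_count_le unfolding k_def by auto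
  have "val_count n cand \<beta> = k"
    unfolding cand_def using \<open>k \<in> {1..n}\<close> best \<open>\<beta> \<in> V\<close>
    by (intro val_count_alpha_pass_cand[OF bij, where V = V and psi = psi]) auto
  with \<beta> have "val_count n x \<alpha> \<le> val_count n cand \<alpha>" unfolding k_def by auto
  then have "max_clique_pot n V f x \<le> max_clique_pot n V f cand"
    using max_clique_pot_le_of_count_le[OF finV \<open>\<alpha> \<in> V\<close> _ C_x] mono_f \<open>\<alpha> \<in> V\<close> by simp
  moreover have "(\<Sum>j=1..n. psi j (x j)) \<le> (\<Sum>j=1..n. psi j (cand j))"
    unfolding cand_def k_def
    using alpha_pass_cand_maximises_vertex_sum[OF finV _ _ x] sorted best \<open>\<beta> \<in> V\<close> by simp
  ultimately have "objF n psi (max_clique_pot n V f) x \<le> objF n psi (max_clique_pot n V f) cand"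
    unfolding objF_def by linarith
  also have "\<dots> \<le> objF n psi (max_clique_pot n V f) (alpha_pass_cand (ord \<alpha>0) b \<alpha>0 k0)"
    using out_max \<open>\<beta> \<in> V\<close> \<open>k \<in> {1..n}\<close> unfolding cand_def by simp
  finally show "objF n psi (max_clique_pot n V f) x
      \<le> objF n psi (max_clique_pot n V f) (alpha_pass_cand (ord \<alpha>0) b \<alpha>0 k0)" .
qed

end
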